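(* Let $0\le k\le n$. Consider $n$ men and $n$ women, and fix a set $G$ of $k$ men and $k$ women. Let $S(k,n)$ be the number of ways to choose the preference rankings of the $n-k$ men and $n-k$ women not in $G$ (each such person strictly ranking all $n$ people of the opposite gender) so that there is no pair of soulmates consisting of a man not in $G$ and a woman not in $G$. Then \[S(k,n) = \sum_{i=0}^{n-k} (-1)^{i}\binom{n-k}{i}^2 (n-1)!^{2i}\, i!\, n!^{2n-2k-2i}.\]
   Context: Each man strictly ranks the $n$ women by a bijection to $\{1,\dots,n\}$ (1 = favorite), and each woman strictly ranks the $n$ men likewise. A man and a woman are soulmates if each ranks the other first. *)

theory Defs
  imports Main "HOL-Library.FuncSet"
begin

text \<open>A ranking is a bijection from
the n people of the opposite gender onto {1..n} (1 = favourite); it is made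
extensional (value 0 outside {..<n}) so that distinct rankings are distinct functions.\<close>
definition rankings :: "nat \<Rightarrow> (nat \<Rightarrow> nat) set" where
  "rankings n = {r. bij_betw r {..<n} {1..n} \<and> (\<forall>x. n \<le> x \<longrightarrow> r x = 0)}"

definition soulmates :: "(nat \<Rightarrow> nat \<Rightarrow> nat) \<Rightarrow> (nat \<Rightarrow> nat \<Rightarrow> nat) \<Rightarrow> nat \<Rightarrow> nat \<Rightarrow> bool" where
  "soulmates P Q m w \<longleftrightarrow> P m w = 1 \<and> Q w m = 1"

definition S_count :: "nat \<Rightarrow> nat set \<Rightarrow> nat set \<Rightarrow> nat" where
  "S_count n GM GW = card {(P, Q).
      P \<in> ({..<n} - GM) \<rightarrow>\<^sub>E rankings n \<and>
      Q \<in> ({..<n} - GW) \<rightarrow>\<^sub>E rankings n \<and>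
      \<not> (\<exists>m \<in> {..<n} - GM. \<exists>w \<in> {..<n} - GW. soulmates P Q m w)}"

end

theory Submission
  imports Defs
begin

text \<open>Write F(M, W) for the number of soulmate-free ranking profiles of the men in M and the
women in W. Giving a further man m an arbitrary ranking multiplies F(M, W) by n!, and the profiles
so obtained that are not soulmate-free are those in which m has a soulmate w in W. This w is unique;
fixing the first choices of m and w leaves (n-1)!^2 choices for their rankings, and since w ranks m
first no man of M can be her soulmate, so the rest is counted by F(M, W - w). Hence
F(M + m, W) = n! F(M, W) - |W| (n-1)!^2 F(M, W - w), which together with F({}, W) = n!^|W| is the
recurrence of the matching polynomial of the complete bipartite graph K(|M|, |W|), evaluated at
x = n! and y = (n-1)!^2.\<close>

definition ext_bijections :: "'a set \<Rightarrow> 'b set \<Rightarrow> 'b \<Rightarrow> ('a \<Rightarrow> 'b) set" where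
  "ext_bijections A B d = {f. bij_betw f A B \<and> (\<forall>x. x \<notin> A \<longrightarrow> f x = d)}"

lemma bij_betw_insert_iff:
  assumes "a \<notin> A" "f a \<in> B"
  shows "bij_betw f (insert a A) B \<longleftrightarrow> bij_betw f A (B - {f a})"
  using notIn_Un_bij_betw3[of a A f "B - {f a}"] assms by (simp add: insert_absorb)

lemma ext_bijections_fixed_value:
  assumes "a \<notin> A" "b \<in> B"
  shows "{f \<in> ext_bijections (insert a A) B d. f a = b} = (\<lambda>g. g(a := b)) ` ext_bijections A (B - {b}) d"
proof (intro equalityI subsetI)
  fix f assume "f \<in> {f \<in> ext_bijections (insert a A) B d. f a = b}"
  then have bij: "bij_betw f (insert a A) B" and fa: "f a = b" and out: "\<forall>x. x \<notin> insert a A \<longrightarrow> f x = d"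
    by (simp_all add: ext_bijections_def)
  have "bij_betw f A (B - {b})"
    using bij fa assms by (simp add: bij_betw_insert_iff)
  then have "bij_betw (f(a := d)) A (B - {b})"
    by (rule bij_betw_cong[THEN iffD2, rotated]) (use assms(1) in auto)
  then have "f(a := d) \<in> ext_bijections A (B - {b}) d"
    using out by (simp add: ext_bijections_def)
  moreover have "f = (f(a := d))(a := b)"
    using fa by (simp add: fun_upd_idem)
  ultimately show "f \<in> (\<lambda>g. g(a := b)) ` ext_bijections A (B - {b}) d"
    by blast
next
  fix f assume "f \<in> (\<lambda>g. g(a := b)) ` ext_bijections A (B - {b}) d"
  then obtain g where g: "g \<in> ext_bijections A (B - {b}) d" and f: "f = g(a := b)"
    by blast
  have "bij_betw g A (B - {b})"
    using g by (simp add: ext_bijections_def)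
  then have "bij_betw f A (B - {b})"
    unfolding f by (rule bij_betw_cong[THEN iffD1, rotated]) (use assms(1) in auto)
  then have "bij_betw f (insert a A) B"
    using assms f by (simp add: bij_betw_insert_iff)
  then show "f \<in> {f \<in> ext_bijections (insert a A) B d. f a = b}"
    using g f by (simp add: ext_bijections_def)
qed

lemma card_ext_bijections_fixed_value:
  assumes "a \<notin> A" "b \<in> B"
  shows "card {f \<in> ext_bijections (insert a A) B d. f a = b} = card (ext_bijections A (B - {b}) d)"
proof -
  have "inj_on (\<lambda>g. g(a := b)) (ext_bijections A (B - {b}) d)"
    by (rule inj_on_inverseI[where g = "\<lambda>f. f(a := d)"])
      (use assms(1) in \<open>simp add: ext_bijections_def fun_upd_idem\<close>)
  then show ?thesis
    by (simp add: ext_bijections_fixed_value[OF assms] card_image)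
qed

lemma card_ext_bijections:
  assumes "finite A" "finite B" "card A = card B"
  shows "card (ext_bijections A B d) = fact (card A)"
  using assms
proof (induction A arbitrary: B rule: finite_induct)
  case empty
  then have "ext_bijections ({} :: 'a set) B d = {\<lambda>_. d}"
    by (auto simp: ext_bijections_def bij_betw_def)
  then show ?case by simp
next
  case (insert a A)
  have fibre: "card {f \<in> ext_bijections (insert a A) B d. f a = b} = fact (card A)" if "b \<in> B" for b
  proof -
    have "card (B - {b}) = card A"
      using insert.hyps insert.prems that by simp
    then have "card (ext_bijections A (B - {b}) d) = fact (card A)"
      using insert.IH[of "B - {b}"] insert.prems(1) by simp
    then show ?thesis
      using insert.hyps(2) that by (simp add: card_ext_bijections_fixed_value)
  qed
  have "f a \<in> B" if "f \<in> ext_bijections (insert a A) B d" for f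
    using that by (auto simp: ext_bijections_def bij_betw_def)
  then have "ext_bijections (insert a A) B d = (\<Union>b\<in>B. {f \<in> ext_bijections (insert a A) B d. f a = b})"
    by blast
  then have "card (ext_bijections (insert a A) B d) = card (\<Union>b\<in>B. {f \<in> ext_bijections (insert a A) B d. f a = b})"
    by (rule arg_cong)
  also have "\<dots> = (\<Sum>b\<in>B. card {f \<in> ext_bijections (insert a A) B d. f a = b})"
  proof (rule card_UN_disjoint)
    show "\<forall>b\<in>B. finite {f \<in> ext_bijections (insert a A) B d. f a = b}"
    proof
      fix b assume "b \<in> B"
      then have "card {f \<in> ext_bijections (insert a A) B d. f a = b} > 0"
        using fibre by simp
      then show "finite {f \<in> ext_bijections (insert a A) B d. f a = b}"
        by (rule card_ge_0_finite)
    qed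
  qed (use insert.prems in blast)+
  also have "\<dots> = card B * fact (card A)"
    by (simp add: fibre)
  finally show ?case
    by (simp add: insert.prems(2)[symmetric] insert.hyps)
qed

lemma rankings_eq_ext_bijections: "rankings n = ext_bijections {..<n} {1..n} 0"
  by (auto simp: rankings_def ext_bijections_def not_less)

lemma card_rankings: "card (rankings n) = fact n"
  by (simp add: rankings_eq_ext_bijections card_ext_bijections)

lemma finite_rankings: "finite (rankings n)"
  using card_rankings by (simp add: card_ge_0_finite)

lemma card_rankings_fixed_value:
  assumes "w < n" "j \<in> {1..n}"
  shows "card {r \<in> rankings n. r w = j} = fact (n - 1)"
proof -
  have "rankings n = ext_bijections (insert w ({..<n} - {w})) {1..n} 0"
    using assms(1) by (simp add: rankings_eq_ext_bijections insert_absorb)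
  then have "card {r \<in> rankings n. r w = j} = card (ext_bijections ({..<n} - {w}) ({1..n} - {j}) 0)"
    using card_ext_bijections_fixed_value[of w "{..<n} - {w}" j "{1..n}" 0] assms(2) by simp
  also have "\<dots> = fact (n - 1)"
    using assms by (simp add: card_ext_bijections)
  finally show ?thesis .
qed

lemma rankings_favourite_unique:
  assumes "r \<in> rankings n" "r x = 1" "r y = 1"
  shows "x = y"
proof -
  have bij: "bij_betw r {..<n} {1..n}" and outside: "\<forall>z. n \<le> z \<longrightarrow> r z = 0"
    using assms(1) by (auto simp: rankings_def)
  have "x < n" "y < n"
    using outside assms(2,3) by (auto simp flip: not_less)
  then show ?thesis
    using inj_onD[OF bij_betw_imp_inj_on[OF bij]] assms(2,3) by simp
qed

lemma sum_Suc_choose: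
  fixes f :: "nat \<Rightarrow> 'a::comm_semiring_1"
  shows "(\<Sum>i\<le>Suc a. of_nat (Suc a choose i) * f i) = (\<Sum>i\<le>a. of_nat (a choose i) * (f i + f (Suc i)))"
proof -
  have "(\<Sum>i\<le>Suc a. of_nat (Suc a choose i) * f i)
      = (f 0 + (\<Sum>i\<le>a. of_nat (a choose Suc i) * f (Suc i))) + (\<Sum>i\<le>a. of_nat (a choose i) * f (Suc i))"
    by (subst sum.atMost_Suc_shift) (simp add: sum.distrib algebra_simps)
  also have "f 0 + (\<Sum>i\<le>a. of_nat (a choose Suc i) * f (Suc i)) = (\<Sum>i\<le>Suc a. of_nat (a choose i) * f i)"
    by (simp only: sum.atMost_Suc_shift) simp
  finally show ?thesis
    by (simp add: sum.distrib algebra_simps binomial_eq_0)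
qed

lemma of_nat_choose_Suc_mult_fact:
  "(of_nat (b choose Suc i) * of_nat (fact (Suc i)) :: 'a::comm_semiring_1)
     = of_nat b * (of_nat (b - 1 choose i) * of_nat (fact i))"
proof -
  have "(b choose Suc i) * fact (Suc i) = b * ((b - 1 choose i) * fact i)"
  proof (cases b)
    case (Suc c)
    have "(b choose Suc i) * fact (Suc i) = (Suc i * (Suc c choose Suc i)) * fact i"
      by (simp add: Suc algebra_simps del: binomial_Suc_Suc)
    also have "\<dots> = b * ((b - 1 choose i) * fact i)"
      by (simp only: Suc_times_binomial Suc) (simp add: algebra_simps)
    finally show ?thesis .
  qed simp
  then show ?thesis
    by (metis of_nat_mult)
qed

text \<open>(a choose i) (b choose i) i! is the number of i-edge matchings of K(a, b).\<close>
definition matching_poly :: "'a::comm_ring_1 \<Rightarrow> 'a \<Rightarrow> nat \<Rightarrow> nat \<Rightarrow> 'a" where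
  "matching_poly x y a b =
     (\<Sum>i\<le>a. (-1) ^ i * of_nat (a choose i) * of_nat (b choose i) * of_nat (fact i) * y ^ i * x ^ (a - i) * x ^ (b - i))"

lemma matching_poly_0: "matching_poly x y 0 b = x ^ b"
  by (simp add: matching_poly_def)

lemma matching_poly_Suc:
  "matching_poly x y (Suc a) b = x * matching_poly x y a b - of_nat b * y * matching_poly x y a (b - 1)"
proof -
  define t where "t i = (-1) ^ i * (of_nat (b choose i) * of_nat (fact i)) * y ^ i * x ^ (Suc a - i) * x ^ (b - i)" for i
  have "matching_poly x y (Suc a) b = (\<Sum>i\<le>Suc a. of_nat (Suc a choose i) * t i)"
    unfolding matching_poly_def t_def by (intro sum.cong refl) (simp add: algebra_simps)
  also have "\<dots> = (\<Sum>i\<le>a. of_nat (a choose i) * t i) + (\<Sum>i\<le>a. of_nat (a choose i) * t (Suc i))"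
    by (simp only: sum_Suc_choose distrib_left sum.distrib)
  also have "(\<Sum>i\<le>a. of_nat (a choose i) * t i) = x * matching_poly x y a b"
    unfolding matching_poly_def sum_distrib_left t_def
    by (intro sum.cong refl) (simp add: Suc_diff_le algebra_simps)
  also have "(\<Sum>i\<le>a. of_nat (a choose i) * t (Suc i)) = - (of_nat b * y * matching_poly x y a (b - 1))"
    unfolding matching_poly_def sum_distrib_left sum_negf[symmetric]
  proof (intro sum.cong refl)
    fix i
    show "of_nat (a choose i) * t (Suc i) = - (of_nat b * y * ((-1) ^ i * of_nat (a choose i) * of_nat (b - 1 choose i)
        * of_nat (fact i) * y ^ i * x ^ (a - i) * x ^ (b - 1 - i)))"
      unfolding t_def of_nat_choose_Suc_mult_fact by (simp add: algebra_simps)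
  qed
  finally show ?thesis
    by simp
qed

definition soulmate_free :: "nat \<Rightarrow> nat set \<Rightarrow> nat set \<Rightarrow> ((nat \<Rightarrow> nat \<Rightarrow> nat) \<times> (nat \<Rightarrow> nat \<Rightarrow> nat)) set" where
  "soulmate_free n M W = {(P, Q). P \<in> M \<rightarrow>\<^sub>E rankings n \<and> Q \<in> W \<rightarrow>\<^sub>E rankings n \<and>
      \<not> (\<exists>m\<in>M. \<exists>w\<in>W. soulmates P Q m w)}"

lemma card_soulmate_free_new_man:
  assumes "m \<notin> M"
  shows "card {(P, Q). P \<in> insert m M \<rightarrow>\<^sub>E rankings n \<and> Q \<in> W \<rightarrow>\<^sub>E rankings n \<and>
      \<not> (\<exists>m'\<in>M. \<exists>w\<in>W. soulmates P Q m' w)} = fact n * card (soulmate_free n M W)"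
    (is "card ?X = _")
proof -
  let ?f = "\<lambda>(r, P, Q). (P(m := r), Q)"
  let ?g = "\<lambda>(P, Q). (P m, P(m := undefined), Q)"
  have "bij_betw ?f (rankings n \<times> soulmate_free n M W) ?X"
  proof (rule bij_betw_byWitness[where f' = ?g])
    show "\<forall>z \<in> rankings n \<times> soulmate_free n M W. ?g (?f z) = z"
    proof
      fix z assume "z \<in> rankings n \<times> soulmate_free n M W"
      moreover obtain r P Q where z: "z = (r, P, Q)"
        using prod_cases3 by blast
      ultimately have P: "P \<in> M \<rightarrow>\<^sub>E rankings n"
        by (simp add: soulmate_free_def)
      have "P m = undefined"
        using P assms by (rule PiE_arb)
      then show "?g (?f z) = z"
        using z by (simp add: fun_upd_idem_iff)
    qed
    show "\<forall>z \<in> ?X. ?f (?g z) = z"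
      by auto
    show "?f ` (rankings n \<times> soulmate_free n M W) \<subseteq> ?X"
      using assms by (auto simp: soulmate_free_def soulmates_def PiE_fun_upd split: if_splits)
    show "?g ` ?X \<subseteq> rankings n \<times> soulmate_free n M W"
      using assms by (auto simp: soulmate_free_def soulmates_def fun_upd_in_PiE split: if_splits)
  qed
  then have "card ?X = card (rankings n \<times> soulmate_free n M W)"
    by (rule bij_betw_same_card[symmetric])
  then show ?thesis
    by (simp add: card_cartesian_product card_rankings)
qed

lemma card_soulmate_free_new_couple:
  assumes "m \<notin> M" "w \<notin> W" "m < n" "w < n"
  shows "card {(P, Q). P \<in> insert m M \<rightarrow>\<^sub>E rankings n \<and> Q \<in> insert w W \<rightarrow>\<^sub>E rankings n \<and>
      \<not> (\<exists>m'\<in>M. \<exists>w'\<in>insert w W. soulmates P Q m' w') \<and> soulmates P Q m w}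
    = fact (n - 1) ^ 2 * card (soulmate_free n M W)"
    (is "card ?Y = _")
proof -
  let ?D = "{r \<in> rankings n. r w = 1} \<times> {q \<in> rankings n. q m = 1} \<times> soulmate_free n M W"
  let ?f = "\<lambda>(r, q, P, Q). (P(m := r), Q(w := q))"
  let ?g = "\<lambda>(P, Q). (P m, Q w, P(m := undefined), Q(w := undefined))"
  have "bij_betw ?f ?D ?Y"
  proof (rule bij_betw_byWitness[where f' = ?g])
    show "\<forall>z \<in> ?D. ?g (?f z) = z"
    proof
      fix z assume "z \<in> ?D"
      moreover obtain r q P Q where z: "z = (r, q, P, Q)"
        using prod_cases4 by blast
      ultimately have P: "P \<in> M \<rightarrow>\<^sub>E rankings n" and Q: "Q \<in> W \<rightarrow>\<^sub>E rankings n"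
        by (simp_all add: soulmate_free_def)
      have "P m = undefined" "Q w = undefined"
        using PiE_arb[OF P assms(1)] PiE_arb[OF Q assms(2)] .
      then show "?g (?f z) = z"
        using z by (simp add: fun_upd_idem_iff)
    qed
    show "\<forall>z \<in> ?Y. ?f (?g z) = z"
      by auto
    show "?f ` ?D \<subseteq> ?Y"
    proof
      fix y assume "y \<in> ?f ` ?D"
      then obtain z where "z \<in> ?D" and y: "y = ?f z"
        by blast
      moreover obtain r q P Q where z: "z = (r, q, P, Q)"
        using prod_cases4 by blast
      ultimately have r: "r \<in> rankings n" "r w = 1" and q: "q \<in> rankings n" "q m = 1"
        and PQ: "(P, Q) \<in> soulmate_free n M W" and y: "y = (P(m := r), Q(w := q))"
        by simp_all
      have "\<not> soulmates (P(m := r)) (Q(w := q)) m' w'" if "m' \<in> M" "w' \<in> insert w W" for m' w'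
      proof
        assume soul: "soulmates (P(m := r)) (Q(w := q)) m' w'"
        have "m' \<noteq> m"
          using that(1) assms(1) by blast
        show False
        proof (cases "w' = w")
          case True
          then have "q m' = 1"
            using soul by (simp add: soulmates_def)
          then show False
            using rankings_favourite_unique[OF q(1) q(2)] \<open>m' \<noteq> m\<close> by simp
        next
          case False
          then have "soulmates P Q m' w'"
            using soul \<open>m' \<noteq> m\<close> by (simp add: soulmates_def)
          then show False
            using PQ that False by (auto simp: soulmate_free_def)
        qed
      qed
      moreover have "soulmates (P(m := r)) (Q(w := q)) m w"
        using r q by (simp add: soulmates_def)
      ultimately show "y \<in> ?Y"
        using r q PQ unfolding y by (auto simp: soulmate_free_def PiE_fun_upd)
    qed
    show "?g ` ?Y \<subseteq> ?D"
    proof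
      fix y assume "y \<in> ?g ` ?Y"
      then obtain P Q where "(P, Q) \<in> ?Y" and y: "y = ?g (P, Q)"
        by blast
      then show "y \<in> ?D"
        using assms(1,2) by (auto simp: soulmate_free_def soulmates_def fun_upd_in_PiE)
    qed
  qed
  then have "card ?Y = card ?D"
    by (rule bij_betw_same_card[symmetric])
  also have "\<dots> = fact (n - 1) ^ 2 * card (soulmate_free n M W)"
  proof -
    have "card {r \<in> rankings n. r w = 1} = fact (n - 1)" "card {q \<in> rankings n. q m = 1} = fact (n - 1)"
      using assms(3,4) by (simp_all add: card_rankings_fixed_value)
    then show ?thesis
      by (simp add: card_cartesian_product power2_eq_square)
  qed
  finally show ?thesis .
qed

lemma card_soulmate_free_insert_man:
  assumes "m \<notin> M" "m < n" "finite M" "finite W" "W \<subseteq> {..<n}"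
  shows "card (soulmate_free n (insert m M) W)
      + (\<Sum>w\<in>W. fact (n - 1) ^ 2 * card (soulmate_free n M (W - {w})))
    = fact n * card (soulmate_free n M W)"
proof -
  define X where "X = {(P, Q). P \<in> insert m M \<rightarrow>\<^sub>E rankings n \<and> Q \<in> W \<rightarrow>\<^sub>E rankings n \<and>
      \<not> (\<exists>m'\<in>M. \<exists>w\<in>W. soulmates P Q m' w)}"
  define Y where "Y w = {(P, Q). P \<in> insert m M \<rightarrow>\<^sub>E rankings n \<and> Q \<in> W \<rightarrow>\<^sub>E rankings n \<and>
      \<not> (\<exists>m'\<in>M. \<exists>w'\<in>W. soulmates P Q m' w') \<and> soulmates P Q m w}" for w
  have "X \<subseteq> (insert m M \<rightarrow>\<^sub>E rankings n) \<times> (W \<rightarrow>\<^sub>E rankings n)"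
    by (auto simp: X_def)
  moreover have "finite ((insert m M \<rightarrow>\<^sub>E rankings n) \<times> (W \<rightarrow>\<^sub>E rankings n))"
    using assms(3,4) by (simp add: finite_PiE finite_rankings)
  ultimately have "finite X"
    by (rule finite_subset)
  have X_split: "X = soulmate_free n (insert m M) W \<union> (\<Union>w\<in>W. Y w)"
    by (auto simp: X_def Y_def soulmate_free_def)
  have Y_disjoint: "Y w \<inter> Y w' = {}" if "w \<noteq> w'" for w w'
  proof -
    have "P m w \<noteq> 1 \<or> P m w' \<noteq> 1" if "P \<in> insert m M \<rightarrow>\<^sub>E rankings n" for P
      using rankings_favourite_unique[of "P m" n w w'] that \<open>w \<noteq> w'\<close> by auto
    then show ?thesis
      by (auto simp: Y_def soulmates_def)
  qed
  have card_Y: "card (Y w) = fact (n - 1) ^ 2 * card (soulmate_free n M (W - {w}))" if "w \<in> W" for w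
    using card_soulmate_free_new_couple[of m M w "W - {w}" n, unfolded insert_Diff[OF that]]
      assms that by (auto simp: Y_def)
  have "card X = card (soulmate_free n (insert m M) W) + card (\<Union>w\<in>W. Y w)"
    unfolding X_split
    using \<open>finite X\<close> X_split by (intro card_Un_disjoint) (auto simp: Y_def soulmate_free_def)
  also have "card (\<Union>w\<in>W. Y w) = (\<Sum>w\<in>W. card (Y w))"
    using \<open>finite X\<close> X_split assms(4) Y_disjoint by (intro card_UN_disjoint) auto
  also have "\<dots> = (\<Sum>w\<in>W. fact (n - 1) ^ 2 * card (soulmate_free n M (W - {w})))"
    using card_Y by simp
  finally show ?thesis
    using card_soulmate_free_new_man[OF assms(1), of n W] by (simp add: X_def)
qed

lemma card_soulmate_free_eq_matching_poly:
  assumes "finite M" "finite W" "M \<subseteq> {..<n}" "W \<subseteq> {..<n}"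
  shows "int (card (soulmate_free n M W)) = matching_poly (fact n) (fact (n - 1) ^ 2) (card M) (card W)"
  using assms
proof (induction M arbitrary: W rule: finite_induct)
  case empty
  have "soulmate_free n {} W = ({} \<rightarrow>\<^sub>E rankings n) \<times> (W \<rightarrow>\<^sub>E rankings n)"
    by (auto simp: soulmate_free_def)
  then show ?case
    using empty.prems by (simp add: card_cartesian_product card_PiE card_rankings matching_poly_0)
next
  case (insert m M)
  let ?p = "matching_poly (fact n) (fact (n - 1) ^ 2 :: int) (card M)"
  have IH: "int (card (soulmate_free n M W')) = ?p (card W')" if "W' \<subseteq> W" for W'
    using insert.IH[of W'] insert.prems that finite_subset by auto
  have "card (soulmate_free n (insert m M) W) + (\<Sum>w\<in>W. fact (n - 1) ^ 2 * card (soulmate_free n M (W - {w})))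
      = fact n * card (soulmate_free n M W)"
    using insert.hyps insert.prems by (intro card_soulmate_free_insert_man) auto
  then have "int (card (soulmate_free n (insert m M) W))
      + int (\<Sum>w\<in>W. fact (n - 1) ^ 2 * card (soulmate_free n M (W - {w})))
      = int (fact n * card (soulmate_free n M W))"
    by (simp only: of_nat_add[symmetric])
  then have "int (card (soulmate_free n (insert m M) W))
      = int (fact n * card (soulmate_free n M W))
        - int (\<Sum>w\<in>W. fact (n - 1) ^ 2 * card (soulmate_free n M (W - {w})))"
    by linarith
  also have "\<dots> = fact n * ?p (card W) - (\<Sum>w\<in>W. fact (n - 1) ^ 2 * ?p (card W - 1))"
    using IH insert.prems(1) by (simp add: card_Diff_singleton)
  also have "\<dots> = matching_poly (fact n) (fact (n - 1) ^ 2) (card (insert m M)) (card W)"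
    using insert.hyps by (simp add: matching_poly_Suc algebra_simps)
  finally show ?case .
qed

lemma matching_poly_diagonal:
  "matching_poly x (z ^ 2) a a
    = (\<Sum>i = 0..a. (-1) ^ i * of_nat (a choose i) ^ 2 * z ^ (2 * i) * of_nat (fact i) * x ^ (2 * a - 2 * i))"
  unfolding matching_poly_def atLeast0AtMost
proof (intro sum.cong refl)
  fix i assume "i \<in> {..a}"
  then have "2 * a - 2 * i = (a - i) + (a - i)"
    by auto
  then show "(-1) ^ i * of_nat (a choose i) * of_nat (a choose i) * of_nat (fact i) * (z ^ 2) ^ i * x ^ (a - i) * x ^ (a - i)
      = (-1) ^ i * of_nat (a choose i) ^ 2 * z ^ (2 * i) * of_nat (fact i) * x ^ (2 * a - 2 * i)"
    by (simp add: power_add power_mult power2_eq_square power_mult_distrib mult_ac)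
qed

theorem mainTheorem2:
  fixes n k :: nat and GM GW :: "nat set"
  assumes "k \<le> n"
    and "GM \<subseteq> {..<n}" and "card GM = k"
    and "GW \<subseteq> {..<n}" and "card GW = k"
  shows "int (S_count n GM GW) =
    (\<Sum>i = 0..n - k. (-1) ^ i * int ((n - k) choose i) ^ 2 * int (fact (n - 1)) ^ (2 * i)
        * int (fact i) * int (fact n) ^ (2 * n - 2 * k - 2 * i))"
proof -
  have "finite GM" "finite GW"
    using assms(2,4) finite_subset by blast+
  then have card_outside: "card ({..<n} - GM) = n - k" "card ({..<n} - GW) = n - k"
    using assms by (simp_all add: card_Diff_subset)
  have "int (S_count n GM GW) = int (card (soulmate_free n ({..<n} - GM) ({..<n} - GW)))"
    by (simp add: S_count_def soulmate_free_def)
  also have "\<dots> = matching_poly (fact n) (fact (n - 1) ^ 2) (n - k) (n - k)"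
    using card_soulmate_free_eq_matching_poly[of "{..<n} - GM" "{..<n} - GW" n] card_outside by simp
  finally show ?thesis
    by (simp add: matching_poly_diagonal diff_mult_distrib2)
qed

thm_deps mainTheorem2

end
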